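(* Let $n\ge 2$, $1\le r\le n-1$, and let $p(q)=q^n+a_rq^r+a_{r-1}q^{r-1}+\dots+a_1q+a_0$ with $a_0,\dots,a_r\in\mathbb{H}$ and $a_r\neq 0$. Put $\lambda=\big(\max_{0\le j\le r}|a_j|\big)^{1/n}$. Then every zero $q\in\mathbb{H}$ of $p$ satisfies $$|q|\le \lambda+\lambda^2+\dots+\lambda^{r+1}.$$
   Context: $\mathbb{H}$ denotes the real quaternions with the Euclidean norm $|q|=\sqrt{q\bar q}$. The polynomial $p$ (whose coefficients of $q^{r+1},\dots,q^{n-1}$ vanish) has coefficients written to the left of the powers and is evaluated at $q\in\mathbb{H}$ by direct substitution, $p(q)=q^n+a_rq^r+\dots+a_1q+a_0$; a zero of $p$ is a $q\in\mathbb{H}$ with $p(q)=0$. *)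

theory Defs
  imports Complex_Main
begin

text \<open>The real quaternions H, represented by their four real coordinates
  q = Re + Im1 i + Im2 j + Im3 k, with the Hamilton product (i^2 = j^2 = k^2 = ijk = -1).\<close>

datatype quat = Quat (qRe: real) (qIm1: real) (qIm2: real) (qIm3: real)

definition qzero :: quat where "qzero = Quat 0 0 0 0"
definition qone :: quat where "qone = Quat 1 0 0 0"

definition qadd :: "quat \<Rightarrow> quat \<Rightarrow> quat" where
  "qadd p q = Quat (qRe p + qRe q) (qIm1 p + qIm1 q) (qIm2 p + qIm2 q) (qIm3 p + qIm3 q)"

definition qmult :: "quat \<Rightarrow> quat \<Rightarrow> quat" where
  "qmult p q = Quat
     (qRe p * qRe q - qIm1 p * qIm1 q - qIm2 p * qIm2 q - qIm3 p * qIm3 q)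
     (qRe p * qIm1 q + qIm1 p * qRe q + qIm2 p * qIm3 q - qIm3 p * qIm2 q)
     (qRe p * qIm2 q - qIm1 p * qIm3 q + qIm2 p * qRe q + qIm3 p * qIm1 q)
     (qRe p * qIm3 q + qIm1 p * qIm2 q - qIm2 p * qIm1 q + qIm3 p * qRe q)"

definition qnorm :: "quat \<Rightarrow> real" where
  "qnorm q = sqrt ((qRe q)\<^sup>2 + (qIm1 q)\<^sup>2 + (qIm2 q)\<^sup>2 + (qIm3 q)\<^sup>2)"

primrec qpow :: "quat \<Rightarrow> nat \<Rightarrow> quat" where
  "qpow q 0 = qone"
| "qpow q (Suc m) = qmult q (qpow q m)"

definition qpoly_eval :: "nat \<Rightarrow> nat \<Rightarrow> (nat \<Rightarrow> quat) \<Rightarrow> quat \<Rightarrow> quat" where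
  "qpoly_eval n r a q = qadd (qpow q n) (foldr (\<lambda>j acc. qadd (qmult (a j) (qpow q j)) acc) [0..<Suc r] qzero)"

end

theory Submission
  imports Defs "HOL-Analysis.Analysis"
begin

text \<open>If \<open>q\<close> is a zero, multiplicativity and subadditivity of the norm give
  \<open>|q|^n = |\<Sum>j\<le>r. a\<^sub>j q^j| \<le> \<lambda>^n \<Sum>j\<le>r. |q|^j\<close>. Write \<open>|q| = \<lambda> t\<close> and
  \<open>T = 1 + \<lambda> + \<dots> + \<lambda>^r\<close>. If \<open>t > T\<close>, then \<open>t > 1\<close> and
  \<open>\<Sum>j\<le>r. \<lambda>^j t^j \<le> T t^r < t^(r+1) \<le> t^n\<close>, which after multiplication by \<open>\<lambda>^n\<close>
  contradicts the first inequality. Hence \<open>|q| \<le> \<lambda> T = \<lambda> + \<dots> + \<lambda>^(r+1)\<close>.\<close>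

definition quat_vec :: "quat \<Rightarrow> (real \<times> real) \<times> (real \<times> real)" where
  "quat_vec p = ((qRe p, qIm1 p), (qIm2 p, qIm3 p))"

lemma qnorm_eq_norm_quat_vec: "qnorm p = norm (quat_vec p)"
  unfolding qnorm_def quat_vec_def norm_Pair by (simp add: add.assoc)

lemma qnorm_nonneg: "qnorm p \<ge> 0"
  by (simp add: qnorm_def)

lemma qnorm_pos: "p \<noteq> qzero \<Longrightarrow> qnorm p > 0"
  by (cases p) (auto simp: qnorm_eq_norm_quat_vec quat_vec_def qzero_def zero_prod_def)

lemma qnorm_qadd_le: "qnorm (qadd p q) \<le> qnorm p + qnorm q"
proof -
  have "quat_vec (qadd p q) = quat_vec p + quat_vec q"
    by (simp add: quat_vec_def qadd_def)
  then show ?thesis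
    by (simp add: qnorm_eq_norm_quat_vec norm_triangle_ineq)
qed

lemma qnorm_eq_if_qadd_eq_qzero: "qadd p q = qzero \<Longrightarrow> qnorm p = qnorm q"
  by (cases p; cases q) (simp add: qadd_def qzero_def qnorm_def add_eq_0_iff)

lemma qnorm_qmult: "qnorm (qmult p q) = qnorm p * qnorm q"
proof -
  have "(qRe (qmult p q))\<^sup>2 + (qIm1 (qmult p q))\<^sup>2 + (qIm2 (qmult p q))\<^sup>2 + (qIm3 (qmult p q))\<^sup>2
      = ((qRe p)\<^sup>2 + (qIm1 p)\<^sup>2 + (qIm2 p)\<^sup>2 + (qIm3 p)\<^sup>2)
        * ((qRe q)\<^sup>2 + (qIm1 q)\<^sup>2 + (qIm2 q)\<^sup>2 + (qIm3 q)\<^sup>2)"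
    unfolding qmult_def by simp algebra
  then show ?thesis
    unfolding qnorm_def by (simp add: real_sqrt_mult)
qed

lemma qnorm_qpow: "qnorm (qpow q n) = qnorm q ^ n"
proof (induction n)
  case 0
  then show ?case by (simp add: qnorm_def qone_def)
next
  case (Suc n)
  then show ?case by (simp add: qnorm_qmult)
qed

lemma qnorm_foldr_qpoly_le:
  "qnorm (foldr (\<lambda>j acc. qadd (qmult (a j) (qpow q j)) acc) js qzero)
     \<le> (\<Sum>j\<leftarrow>js. qnorm (a j) * qnorm q ^ j)"
proof (induction js)
  case Nil
  then show ?case by (simp add: qnorm_def qzero_def)
next
  case (Cons j js)
  then show ?case
    by (auto intro!: order_trans[OF qnorm_qadd_le] simp: qnorm_qmult qnorm_qpow)
qed

lemma qnorm_pow_le_if_qpoly_eval_eq_qzero: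
  assumes "qpoly_eval n r a q = qzero"
  shows "qnorm q ^ n \<le> (\<Sum>j=0..r. qnorm (a j) * qnorm q ^ j)"
proof -
  have "qnorm q ^ n = qnorm (foldr (\<lambda>j acc. qadd (qmult (a j) (qpow q j)) acc) [0..<Suc r] qzero)"
    using qnorm_eq_if_qadd_eq_qzero[OF assms[unfolded qpoly_eval_def]]
    by (simp add: qnorm_qpow)
  also have "\<dots> \<le> (\<Sum>j\<leftarrow>[0..<Suc r]. qnorm (a j) * qnorm q ^ j)"
    by (rule qnorm_foldr_qpoly_le)
  also have "\<dots> = (\<Sum>j=0..r. qnorm (a j) * qnorm q ^ j)"
    by (simp only: sum_set_upt_conv_sum_list_nat[symmetric] set_upt atLeastLessThanSuc_atLeastAtMost)
  finally show ?thesis .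
qed

lemma sum_power_shift: "(\<Sum>k=1..r+1. l ^ k) = l * (\<Sum>j=0..r. l ^ j)" for l :: "'a :: comm_semiring_1"
  by (simp add: sum_distrib_left sum.shift_bounds_cl_Suc_ivl del: sum.cl_ivl_Suc)

lemma one_le_sum_power: "(l :: real) \<ge> 0 \<Longrightarrow> 1 \<le> (\<Sum>j=0..r. l ^ j)"
  by (induction r) (simp_all add: add_increasing2)

lemma root_bound_of_power_le_sum_powers:
  fixes x l :: real
  assumes "x \<ge> 0" and "l > 0" and "r + 1 \<le> n"
    and bound: "x ^ n \<le> l ^ n * (\<Sum>j=0..r. x ^ j)"
  shows "x \<le> (\<Sum>k=1..r+1. l ^ k)"
proof (rule ccontr)
  define T where "T = (\<Sum>j=0..r. l ^ j)"
  define t where "t = x / l"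
  have x_eq: "x = l * t"
    using \<open>l > 0\<close> by (simp add: t_def)
  assume "\<not> ?thesis"
  then have "l * T < l * t"
    by (simp only: T_def x_eq sum_power_shift not_le)
  then have "t > T"
    using \<open>l > 0\<close> by simp
  moreover have "T \<ge> 1"
    unfolding T_def using \<open>l > 0\<close> by (simp add: one_le_sum_power)
  ultimately have "t > 1" by simp
  have "(\<Sum>j=0..r. l ^ j * t ^ j) \<le> (\<Sum>j=0..r. l ^ j * t ^ r)"
    using \<open>l > 0\<close> \<open>t > 1\<close> by (auto intro!: sum_mono mult_left_mono power_increasing)
  also have "\<dots> = T * t ^ r"
    by (simp add: T_def sum_distrib_right)
  also have "\<dots> < t ^ (r + 1)"
    using \<open>t > T\<close> \<open>t > 1\<close> by simp
  also have "\<dots> \<le> t ^ n"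
    using \<open>t > 1\<close> \<open>r + 1 \<le> n\<close> by (intro power_increasing) auto
  finally have "l ^ n * (\<Sum>j=0..r. l ^ j * t ^ j) < l ^ n * t ^ n"
    using \<open>l > 0\<close> by simp
  then show False
    using bound by (simp add: x_eq power_mult_distrib)
qed

theorem theorem3:
  fixes n r :: nat and a :: "nat \<Rightarrow> quat" and q :: quat
  assumes "n \<ge> 2" and "1 \<le> r" and "r \<le> n - 1"
    and "a r \<noteq> qzero"
    and "qpoly_eval n r a q = qzero"
  shows "qnorm q \<le> (\<Sum>k=1..r+1. (root n (Max ((\<lambda>j. qnorm (a j)) ` {0..r}))) ^ k)"
proof -
  define M where "M = Max ((\<lambda>j. qnorm (a j)) ` {0..r})"
  have coeff_le: "qnorm (a j) \<le> M" if "j \<in> {0..r}" for j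
    unfolding M_def using that by (intro Max_ge) auto
  have "M > 0"
    using coeff_le[of r] qnorm_pos[OF \<open>a r \<noteq> qzero\<close>] by simp
  then have root_pow: "root n M ^ n = M" and "root n M > 0"
    using \<open>n \<ge> 2\<close> by (simp_all add: real_root_pow_pos2)
  have "qnorm q ^ n \<le> (\<Sum>j=0..r. qnorm (a j) * qnorm q ^ j)"
    using \<open>qpoly_eval n r a q = qzero\<close> by (rule qnorm_pow_le_if_qpoly_eval_eq_qzero)
  also have "\<dots> \<le> root n M ^ n * (\<Sum>j=0..r. qnorm q ^ j)"
    unfolding root_pow sum_distrib_left
    using coeff_le by (auto intro!: sum_mono mult_right_mono simp: qnorm_nonneg)
  finally have "qnorm q ^ n \<le> root n M ^ n * (\<Sum>j=0..r. qnorm q ^ j)" .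
  from root_bound_of_power_le_sum_powers[OF qnorm_nonneg \<open>root n M > 0\<close> _ this]
  show ?thesis
    using \<open>r \<le> n - 1\<close> \<open>n \<ge> 2\<close> unfolding M_def by simp
qed

end
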